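(* For any two Mori fiber primitive generating sets $A_{\mathrm f}\subset A$ and $A'_{\mathrm f}\subset A'$ in $N_{\mathbb{R}}$, there exists a finite sequence of elementary links connecting them.
   Context: $N\simeq\mathbb{Z}^d$, $N_{\mathbb{R}}=N\otimes\mathbb{R}$. A primitive generating set of a real vector space spanned by a lattice is a finite set of primitive lattice points whose nonnegative linear combinations give the whole space. A reduction $B\supset B'$: inclusion of primitive generating sets of the same space with $|B|=|B'|+1$. A fiber structure $A_{\mathrm f}\subset A$ ($A$ a primitive generating set): $A_{\mathrm f}\ne\emptyset$ is a primitive generating set of its linear span $L$ (lattice $N\cap L$) and $A_{\mathrm f}=L\cap A$; base $A_{\mathrm b}=\{\bar\pi(v):v\in A\setminus A_{\mathrm f}\}$ where $\pi:N\to N/(N\cap L)$ and $\bar\pi(v)$ is the primitive generator of $\mathbb{R}_{\ge0}\pi(v)$. Irreducible: $|A|=|A_{\mathrm f}|+|A_{\mathrm b}|$. Mori fiber structure (written $A_{\mathrm f}\subset_m A$): irreducible with $|A_{\mathrm f}|=\dim L+1$; such a pair is a Mori fiber primitive generating set. An elementary link between $A_{\mathrm f}\subset_m A$ and $A'_{\mathrm f}\subset_m A'$ is one of the following, or the same with the two pairs exchanged: (trivial) $A=A'$, $A_{\mathrm f}=A'_{\mathrm f}$; (I$_{\mathrm d}$) $A\supset A'$ a reduction, $A_{\mathrm f}=A'_{\mathrm f}$; (I$_{\mathrm m}$) a fiber structure $A''_{\mathrm f}\subset A''$ with $A''=A$, $A_{\mathrm f}\subset_m A''_{\mathrm f}$,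 $A''\supset A'$ and $A''_{\mathrm f}\supset A'_{\mathrm f}$ reductions; (II$_{\mathrm{irr}}$) a fiber structure $A''_{\mathrm f}\subset A''$ with $A''\supset A$, $A''\supset A'$, $A''_{\mathrm f}\supset A_{\mathrm f}$, $A''_{\mathrm f}\supset A'_{\mathrm f}$ all reductions; (II$_{\mathrm{ni}}$) a fiber structure $A''_{\mathrm f}\subset A''$ with $A''\supset A$, $A''\supset A'$ reductions and $A_{\mathrm f}=A''_{\mathrm f}=A'_{\mathrm f}$; (IV$_{\mathrm m}$) a fiber structure $A''_{\mathrm f}\subset A''$ with $A=A''=A'$, $A_{\mathrm f}\subset_m A''_{\mathrm f}$ and $A'_{\mathrm f}\subset_m A''_{\mathrm f}$. A sequence of elementary links connecting two Mori fiber primitive generating sets is a chain of Mori fiber primitive generating sets from one to the other in which consecutive members are related by an elementary link. *)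

theory Defs
  imports "HOL-Analysis.Analysis"
begin

text \<open>The lattice N = Z^d, realised inside N_R = real^'n (d = CARD('n)).\<close>
definition lattice_pts :: "(real^'n) set" where
  "lattice_pts = {x. \<forall>i. x $ i \<in> \<int>}"

text \<open>Primitive lattice point of N.  (For v in a subspace L, primitivity in N \<inter> L
  coincides with primitivity in N.)\<close>
definition primitive :: "real^'n \<Rightarrow> bool" where
  "primitive v \<longleftrightarrow> v \<in> lattice_pts \<and> v \<noteq> 0 \<and>
     \<not> (\<exists>w \<in> lattice_pts. \<exists>k::int. k \<ge> 2 \<and> v = of_int k *\<^sub>R w)"

definition pgs :: "(real^'n) set \<Rightarrow> (real^'n) set \<Rightarrow> bool" where
  "pgs V B \<longleftrightarrow> finite B \<and> (\<forall>b\<in>B. primitive b) \<and>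
     V = {(\<Sum>b\<in>B. c b *\<^sub>R b) | c. \<forall>b\<in>B. c b \<ge> 0}"

definition reduction :: "(real^'n) set \<Rightarrow> (real^'n) set \<Rightarrow> bool" where
  "reduction B B' \<longleftrightarrow> (\<exists>V. pgs V B \<and> pgs V B') \<and> B' \<subseteq> B \<and> card B = card B' + 1"

text \<open>The element pi(u) of the quotient lattice N/(N \<inter> L), represented as a coset of N \<inter> L in N.\<close>
definition qcoset :: "(real^'n) set \<Rightarrow> real^'n \<Rightarrow> (real^'n) set" where
  "qcoset L u = {w \<in> lattice_pts. w - u \<in> L}"

text \<open>bar_pi(v): the primitive generator of the ray R_{\<ge>0} pi(v) in N/(N \<inter> L).\<close>
definition bar_pi :: "(real^'n) set \<Rightarrow> real^'n \<Rightarrow> (real^'n) set" where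
  "bar_pi L v = (THE C. \<exists>u \<in> lattice_pts. C = qcoset L u
       \<and> (\<exists>t::real. t > 0 \<and> u - t *\<^sub>R v \<in> L)
       \<and> u \<notin> L
       \<and> \<not> (\<exists>u' \<in> lattice_pts. \<exists>k::int. k \<ge> 2 \<and> u - of_int k *\<^sub>R u' \<in> L))"

definition fiber_structure :: "(real^'n) set \<Rightarrow> (real^'n) set \<Rightarrow> bool" where
  "fiber_structure Af A \<longleftrightarrow> pgs (span A) A \<and> Af \<noteq> {} \<and> pgs (span Af) Af
     \<and> Af = span Af \<inter> A"

definition base :: "(real^'n) set \<Rightarrow> (real^'n) set \<Rightarrow> (real^'n) set set" where
  "base Af A = bar_pi (span Af) ` (A - Af)"

definition irreducible_fs :: "(real^'n) set \<Rightarrow> (real^'n) set \<Rightarrow> bool" where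
  "irreducible_fs Af A \<longleftrightarrow> fiber_structure Af A \<and> card A = card Af + card (base Af A)"

definition mori_fs :: "(real^'n) set \<Rightarrow> (real^'n) set \<Rightarrow> bool" where
  "mori_fs Af A \<longleftrightarrow> irreducible_fs Af A \<and> card Af = dim (span Af) + 1"

definition mori_fiber_pgs :: "(real^'n) set \<times> (real^'n) set \<Rightarrow> bool" where
  "mori_fiber_pgs P \<longleftrightarrow> pgs UNIV (snd P) \<and> mori_fs (fst P) (snd P)"

definition link_dir :: "(real^'n) set \<times> (real^'n) set \<Rightarrow> (real^'n) set \<times> (real^'n) set \<Rightarrow> bool" where
  "link_dir P P' \<longleftrightarrow> (case P of (Af, A) \<Rightarrow> case P' of (Af', A') \<Rightarrow>
      (A = A' \<and> Af = Af')
    \<or> (reduction A A' \<and> Af = Af')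
    \<or> (\<exists>Af''. fiber_structure Af'' A \<and> mori_fs Af Af'' \<and> reduction A A' \<and> reduction Af'' Af')
    \<or> (\<exists>A'' Af''. fiber_structure Af'' A'' \<and> reduction A'' A \<and> reduction A'' A'
         \<and> reduction Af'' Af \<and> reduction Af'' Af')
    \<or> (\<exists>A''. fiber_structure Af A'' \<and> reduction A'' A \<and> reduction A'' A' \<and> Af = Af')
    \<or> (A = A' \<and> (\<exists>Af''. fiber_structure Af'' A \<and> mori_fs Af Af'' \<and> mori_fs Af' Af'')))"

definition elementary_link :: "(real^'n) set \<times> (real^'n) set \<Rightarrow> (real^'n) set \<times> (real^'n) set \<Rightarrow> bool" where
  "elementary_link P P' \<longleftrightarrow> link_dir P P' \<or> link_dir P' P"

definition links_sequence :: "((real^'n) set \<times> (real^'n) set) list \<Rightarrow> bool" where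
  "links_sequence xs \<longleftrightarrow> xs \<noteq> [] \<and> (\<forall>P \<in> set xs. mori_fiber_pgs P)
     \<and> (\<forall>i. Suc i < length xs \<longrightarrow> elementary_link (xs ! i) (xs ! Suc i))"

end

theory Submission
  imports Defs
begin

text \<open>Every Mori fiber primitive generating set \<open>(F, A)\<close> is linked to a simplicial one \<open>(S, S)\<close>,
  where \<open>S\<close> is a primitive generating set of \<open>N\<^sub>\<real>\<close> with \<open>d + 1\<close> elements. With the fiber \<open>F\<close>
  fixed, any two admissible \<open>A\<close> are connected by adding, removing or exchanging one vector at a
  time (links I\<open>d\<close> and II\<open>ni\<close>). If \<open>F\<close> is not full-dimensional, all but one vector \<open>f\<close> of \<open>F\<close>
  extend to a simplicial \<open>S\<close>, and \<open>(F, insert f S)\<close> reduces to \<open>(S, S)\<close> by a link I\<open>m\<close>. Two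
  simplicial sets sharing a vector up to sign are connected through pairs with fiber \<open>{u, -u}\<close>;
  pivoting twice connects every simplicial set to one containing the standard basis. In dimension
  one the only simplicial set is \<open>{e, -e}\<close>.\<close>

section \<open>Convex cones\<close>

lemma convex_cone_sum:
  assumes "convex_cone C" "\<And>x. x \<in> A \<Longrightarrow> f x \<in> C"
  shows "sum f A \<in> C"
  using assms(2)
proof (induction A rule: infinite_finite_induct)
  case (insert x A)
  then show ?case using convex_cone_add[OF assms(1)] by simp
qed (use assms(1) convex_cone_contains_0 in auto)

lemma convex_cone_hull_finite:
  fixes B :: "'a::real_vector set"
  assumes "finite B"
  shows "convex_cone hull B = {(\<Sum>b\<in>B. c b *\<^sub>R b) | c. \<forall>b\<in>B. c b \<ge> 0}" (is "_ = ?C")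
proof
  show "convex_cone hull B \<subseteq> ?C"
  proof (rule hull_minimal)
    show "B \<subseteq> ?C"
    proof
      fix x assume "x \<in> B"
      then have "(\<Sum>b\<in>B. (if b = x then 1 else 0) *\<^sub>R b) = x"
        using assms by (simp add: if_distrib[of "\<lambda>c. c *\<^sub>R _"] sum.delta cong: if_cong)
      then show "x \<in> ?C" by (intro CollectI exI[of _ "\<lambda>b. if b = x then 1 else 0"]) auto
    qed
    show "convex_cone ?C"
      unfolding convex_cone_iff
    proof (intro conjI ballI allI impI)
      show "0 \<in> ?C" by (intro CollectI exI[of _ "\<lambda>_. 0"]) simp
    next
      fix x y assume "x \<in> ?C" "y \<in> ?C"
      then obtain c d where "x = (\<Sum>b\<in>B. c b *\<^sub>R b)" "\<forall>b\<in>B. c b \<ge> 0"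
        "y = (\<Sum>b\<in>B. d b *\<^sub>R b)" "\<forall>b\<in>B. d b \<ge> 0" by blast
      then show "x + y \<in> ?C"
        by (intro CollectI exI[of _ "\<lambda>b. c b + d b"]) (auto simp: scaleR_add_left sum.distrib)
    next
      fix x and a :: real assume "x \<in> ?C" "0 \<le> a"
      then obtain c where "x = (\<Sum>b\<in>B. c b *\<^sub>R b)" "\<forall>b\<in>B. c b \<ge> 0" by blast
      with \<open>0 \<le> a\<close> show "a *\<^sub>R x \<in> ?C"
        by (intro CollectI exI[of _ "\<lambda>b. a * c b"]) (auto simp: scaleR_sum_right)
    qed
  qed
  show "?C \<subseteq> convex_cone hull B"
    by (force intro: convex_cone_sum convex_cone_convex_cone_hull convex_cone_hull_mul hull_inc)
qed

lemma pgs_iff: "pgs V B \<longleftrightarrow> finite B \<and> (\<forall>b\<in>B. primitive b) \<and> convex_cone hull B = V"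
  unfolding pgs_def by (auto simp: convex_cone_hull_finite)

lemma convex_cone_hull_subset_span: "convex_cone hull S \<subseteq> span S"
  by (simp add: hull_minimal span_superset convex_cone_span)

lemma convex_cone_hull_eq_UNIV_imp_span: "convex_cone hull S = UNIV \<Longrightarrow> span S = UNIV"
  using convex_cone_hull_subset_span by blast

lemma convex_cone_hull_eq_UNIV_imp_normal_eq_0:
  fixes S :: "'a::real_inner set"
  assumes "convex_cone hull S = UNIV" "\<And>t. t \<in> S \<Longrightarrow> 0 \<le> n \<bullet> t"
  shows "n = 0"
proof -
  have "convex_cone {x. 0 \<le> n \<bullet> x}"
    unfolding convex_cone_iff by (simp add: inner_add_right)
  then have "convex_cone hull S \<subseteq> {x. 0 \<le> n \<bullet> x}"
    using assms(2) by (intro hull_minimal) auto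
  then have "0 \<le> n \<bullet> (- n)" using assms(1) by blast
  then show "n = 0" by (metis inner_gt_zero_iff inner_minus_right neg_0_le_iff_le not_le)
qed

lemma convex_cone_hull_insert_neg_sum:
  fixes B :: "'a::real_vector set"
  assumes "finite B" "span B = UNIV"
  shows "convex_cone hull (insert (- sum id B) B) = UNIV"
proof (intro set_eqI iffI)
  fix x :: 'a
  let ?K = "convex_cone hull (insert (- sum id B) B)"
  obtain u where u: "x = (\<Sum>b\<in>B. u b *\<^sub>R b)"
    using assms span_finite[OF assms(1)] by auto
  define M where "M = (\<Sum>b\<in>B. \<bar>u b\<bar>)"
  have "0 \<le> u b + M" if "b \<in> B" for b
    using member_le_sum[OF that, of "\<lambda>b. \<bar>u b\<bar>"] assms(1) unfolding M_def by linarith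
  then have "(\<Sum>b\<in>B. (u b + M) *\<^sub>R b) \<in> ?K"
    by (intro convex_cone_sum convex_cone_convex_cone_hull convex_cone_hull_mul hull_inc) auto
  moreover have "M *\<^sub>R (- sum id B) \<in> ?K"
    unfolding M_def by (intro convex_cone_hull_mul hull_inc) (auto simp: sum_nonneg)
  ultimately have "(\<Sum>b\<in>B. (u b + M) *\<^sub>R b) + M *\<^sub>R (- sum id B) \<in> ?K"
    by (rule convex_cone_hull_add)
  moreover have "(\<Sum>b\<in>B. (u b + M) *\<^sub>R b) + M *\<^sub>R (- sum id B) = x"
    by (simp add: u scaleR_add_left sum.distrib scaleR_sum_right)
  ultimately show "x \<in> ?K" by simp
qed simp

lemma in_span_delete_if_convex_cone_hull_eq_span:
  fixes F :: "'a::real_vector set"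
  assumes "finite F" "convex_cone hull F = span F" "f \<in> F"
  shows "f \<in> span (F - {f})"
proof -
  have "- f \<in> convex_cone hull F" using assms(2,3) by (simp add: span_base span_neg)
  then obtain c where c: "- f = (\<Sum>x\<in>F. c x *\<^sub>R x)" "\<forall>x\<in>F. c x \<ge> 0"
    using convex_cone_hull_finite[OF assms(1)] by auto
  define \<sigma> where "\<sigma> = (\<Sum>x\<in>F - {f}. c x *\<^sub>R x)"
  have "- f = c f *\<^sub>R f + \<sigma>" unfolding c(1) \<sigma>_def using assms(1,3) by (simp add: sum.remove)
  then have "(1 + c f) *\<^sub>R f = - \<sigma>"
    by (simp add: scaleR_add_left eq_neg_iff_add_eq_0 add.assoc) (metis add.commute add.right_inverse add.assoc)
  moreover have "1 + c f > 0" using c(2) assms(3) by (simp add: add_pos_nonneg)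
  ultimately have "f = (1 / (1 + c f)) *\<^sub>R (- \<sigma>)"
    by (metis divide_self_if less_irrefl scaleR_one scaleR_scaleR times_divide_eq_left mult_1)
  moreover have "- \<sigma> \<in> span (F - {f})" unfolding \<sigma>_def by (intro span_neg span_sum span_scale span_base)
  ultimately show ?thesis by (metis span_scale)
qed

section \<open>Lattice points and primitive vectors\<close>

lemma lattice_pts_diff: "x \<in> lattice_pts \<Longrightarrow> y \<in> lattice_pts \<Longrightarrow> x - y \<in> lattice_pts"
  and lattice_pts_uminus: "x \<in> lattice_pts \<Longrightarrow> - x \<in> lattice_pts"
  and lattice_pts_scale: "x \<in> lattice_pts \<Longrightarrow> of_int k *\<^sub>R x \<in> lattice_pts"
  and lattice_pts_sum: "(\<And>x. x \<in> S \<Longrightarrow> f x \<in> lattice_pts) \<Longrightarrow> sum f S \<in> lattice_pts"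
  and lattice_pts_inner: "x \<in> lattice_pts \<Longrightarrow> y \<in> lattice_pts \<Longrightarrow> x \<bullet> y \<in> \<int>"
  and lattice_pts_axis: "axis i 1 \<in> lattice_pts"
proof -
  show "x \<in> lattice_pts \<Longrightarrow> y \<in> lattice_pts \<Longrightarrow> x - y \<in> lattice_pts"
    "x \<in> lattice_pts \<Longrightarrow> - x \<in> lattice_pts"
    "x \<in> lattice_pts \<Longrightarrow> of_int k *\<^sub>R x \<in> lattice_pts"
    "axis i 1 \<in> lattice_pts"
    unfolding lattice_pts_def by (auto simp: axis_def)
  show "x \<in> lattice_pts \<Longrightarrow> y \<in> lattice_pts \<Longrightarrow> x \<bullet> y \<in> \<int>"
    unfolding lattice_pts_def by (auto simp: inner_vec_def inner_real_def intro!: Ints_sum Ints_mult)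
  show "(\<And>x. x \<in> S \<Longrightarrow> f x \<in> lattice_pts) \<Longrightarrow> sum f S \<in> lattice_pts"
    unfolding lattice_pts_def by (auto intro!: Ints_sum)
qed

lemma primitive_lattice_pts: "primitive v \<Longrightarrow> v \<in> lattice_pts"
  and primitive_nonzero: "primitive v \<Longrightarrow> v \<noteq> 0"
  unfolding primitive_def by auto

lemma primitive_uminus: "primitive v \<Longrightarrow> primitive (- v)"
  unfolding primitive_def
  by (metis lattice_pts_uminus minus_minus neg_equal_0_iff_equal scaleR_minus_right)

lemma primitive_axis: "primitive (axis i (1::real))"
  unfolding primitive_def
proof (intro conjI notI)
  assume "\<exists>w\<in>lattice_pts. \<exists>k::int. 2 \<le> k \<and> axis i 1 = of_int k *\<^sub>R w"
  then obtain w and k :: int where w: "w \<in> lattice_pts" "2 \<le> k" "axis i 1 = of_int k *\<^sub>R w"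
    by blast
  then have e: "1 = of_int k * w $ i" by (metis axis_nth real_scaleR_def vector_scaleR_component)
  then have "1 \<le> \<bar>w $ i\<bar>"
    using w(1) by (intro Ints_nonzero_abs_ge1) (auto simp: lattice_pts_def)
  then have "(2::real) * 1 \<le> of_int k * \<bar>w $ i\<bar>" using w(2) by (intro mult_mono) auto
  with e w(2) show False by (simp add: abs_mult)
qed (auto simp: lattice_pts_axis axis_eq_0_iff)

lemma primitive_Basis: "b \<in> (Basis :: (real^'n) set) \<Longrightarrow> primitive b"
  by (auto simp: Basis_vec_def primitive_axis)

text \<open>The sum of the absolute values of the coordinates is a positive integer that drops by the
  factor \<open>k\<close> when a non-primitive \<open>x = k w\<close> is replaced by \<open>w\<close>.\<close>
lemma lattice_pts_primitive_multiple:
  assumes "x \<in> lattice_pts" "x \<noteq> 0"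
  shows "\<exists>p (g::real). primitive p \<and> g > 0 \<and> x = g *\<^sub>R p"
  using assms
proof (induction "nat \<lfloor>\<Sum>i\<in>UNIV. \<bar>x $ i\<bar>\<rfloor>" arbitrary: x rule: less_induct)
  case less
  show ?case
  proof (cases "primitive x")
    case True then show ?thesis by (intro exI[of _ x] exI[of _ 1]) auto
  next
    case False
    then obtain w and k :: int where w: "w \<in> lattice_pts" "2 \<le> k" "x = of_int k *\<^sub>R w"
      using less.prems unfolding primitive_def by auto
    have "w \<noteq> 0" using w less.prems by auto
    have "(\<Sum>i\<in>UNIV. \<bar>w $ i\<bar>) \<in> \<int>" using w(1) unfolding lattice_pts_def by (auto intro!: Ints_sum)
    then obtain z where z: "(\<Sum>i\<in>UNIV. \<bar>w $ i\<bar>) = of_int z" by (auto elim: Ints_cases)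
    have "z \<ge> 1"
    proof -
      obtain i where "w $ i \<noteq> 0" using \<open>w \<noteq> 0\<close> by (metis vec_eq_iff zero_index)
      then have "1 \<le> \<bar>w $ i\<bar>" using w(1) Ints_nonzero_abs_ge1 unfolding lattice_pts_def by auto
      also have "\<dots> \<le> of_int z" unfolding z[symmetric] by (rule member_le_sum) auto
      finally show ?thesis by simp
    qed
    have "(\<Sum>i\<in>UNIV. \<bar>x $ i\<bar>) = of_int k * (\<Sum>i\<in>UNIV. \<bar>w $ i\<bar>)"
      using w(2,3) by (simp add: abs_mult sum_distrib_left)
    then have "\<lfloor>\<Sum>i\<in>UNIV. \<bar>x $ i\<bar>\<rfloor> = k * z" using z by (metis floor_of_int of_int_mult)
    moreover have "\<lfloor>\<Sum>i\<in>UNIV. \<bar>w $ i\<bar>\<rfloor> = z" using z by simp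
    moreover have "z < k * z" using \<open>z \<ge> 1\<close> w(2) by (simp add: less_le_trans[of z "2 * z"])
    ultimately have "nat \<lfloor>\<Sum>i\<in>UNIV. \<bar>w $ i\<bar>\<rfloor> < nat \<lfloor>\<Sum>i\<in>UNIV. \<bar>x $ i\<bar>\<rfloor>"
      using \<open>z \<ge> 1\<close> by simp
    from less.hyps[OF this w(1) \<open>w \<noteq> 0\<close>] obtain p g where "primitive p" "g > 0" "w = g *\<^sub>R p"
      by blast
    with w show ?thesis by (intro exI[of _ p] exI[of _ "of_int k * g"]) auto
  qed
qed

section \<open>The primitive generator \<open>bar_pi\<close> of a ray in the quotient lattice\<close>

text \<open>By Cramer's rule, the cofactor vector of the integral matrix with rows \<open>B\<close> for the row \<open>v\<close> is
  integral and orthogonal to all other rows.\<close>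
lemma lattice_dual_functional:
  fixes B :: "(real^'n) set"
  assumes B: "independent B" "span B = UNIV" "B \<subseteq> lattice_pts" and v: "v \<in> B"
  shows "\<exists>\<phi>\<in>lattice_pts. \<phi> \<bullet> v \<noteq> 0 \<and> (\<forall>b\<in>B - {v}. \<phi> \<bullet> b = 0)"
proof -
  have "card B = CARD('n)" using basis_card_eq_dim[of B UNIV] B by simp
  moreover have "finite B" using B(1) independent_imp_finite by blast
  ultimately obtain \<beta> where \<beta>: "bij_betw \<beta> (UNIV::'n set) B"
    using finite_same_card_bij[of "UNIV::'n set" B] by auto
  define M :: "real^'n^'n" where "M = (\<chi> i. \<beta> i)"
  have "rows M = B" using \<beta> unfolding rows_def row_def M_def by (auto simp: vec_lambda_eta bij_betw_def)
  then have "det M \<noteq> 0"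
    using matrix_left_invertible_span_rows B(2) invertible_left_inverse invertible_det_nz by blast
  obtain j where j: "\<beta> j = v" using \<beta> v unfolding bij_betw_def by blast
  define \<phi> :: "real^'n" where "\<phi> = (\<chi> k. det (\<chi> i l. if l = k then axis j 1 $ i else M $ i $ l))"
  have "M *v ((1 / det M) *\<^sub>R \<phi>) = axis j 1"
    using cramer[OF \<open>det M \<noteq> 0\<close>] by (simp add: \<phi>_def vec_eq_iff)
  then have "M *v \<phi> = det M *\<^sub>R axis j 1"
    using \<open>det M \<noteq> 0\<close>
    by (metis (no_types, lifting) divide_self_if mult.commute scaleR_scaleR scaleR_one
        times_divide_eq_right matrix_vector_mult_scaleR)
  then have comp: "\<beta> i \<bullet> \<phi> = (if i = j then det M else 0)" for i
    using matrix_vector_mul_component[of M \<phi> i] by (cases "i = j") (auto simp: M_def axis_def)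
  have "\<phi> \<in> lattice_pts"
    using B(3) \<beta> unfolding lattice_pts_def \<phi>_def det_def M_def bij_betw_def
    by (auto simp: axis_def intro!: Ints_sum Ints_mult Ints_prod)
  moreover have "\<phi> \<bullet> b = 0" if "b \<in> B - {v}" for b
    using that \<beta> j comp unfolding bij_betw_def by (auto simp: inner_commute)
  moreover have "\<phi> \<bullet> v \<noteq> 0" using comp[of j] j \<open>det M \<noteq> 0\<close> by (simp add: inner_commute)
  ultimately show ?thesis by blast
qed

lemma lattice_separating_functional:
  fixes F :: "(real^'n) set"
  assumes "F \<subseteq> lattice_pts" "v \<in> lattice_pts" "v \<notin> span F"
  shows "\<exists>\<phi>\<in>lattice_pts. (\<forall>a\<in>span F. \<phi> \<bullet> a = 0) \<and> \<phi> \<bullet> v \<noteq> 0"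
proof -
  obtain F1 where F1: "F1 \<subseteq> F" "independent F1" "F \<subseteq> span F1"
    by (rule maximal_independent_subset)
  have spF1: "span F1 = span F" using F1 by (metis span_mono span_span subset_antisym)
  then have "independent (insert v F1)" using F1(2) assms(3) by (simp add: independent_insertI)
  then obtain B where B: "insert v F1 \<subseteq> B" "B \<subseteq> insert v F1 \<union> Basis" "independent B"
    "insert v F1 \<union> Basis \<subseteq> span B"
    using maximal_independent_subset_extend[of "insert v F1" "insert v F1 \<union> Basis"] by blast
  have "span B = UNIV" using B(4) by (metis span_Basis span_mono span_span le_sup_iff top.extremum_uniqueI)
  moreover have "B \<subseteq> lattice_pts"
    using B(2) F1(1) assms(1,2) primitive_Basis primitive_lattice_pts by blast
  ultimately obtain \<phi> where \<phi>: "\<phi> \<in> lattice_pts" "\<phi> \<bullet> v \<noteq> 0" "\<forall>b\<in>B - {v}. \<phi> \<bullet> b = 0"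
    using lattice_dual_functional[OF B(3)] B(1) by blast
  have "F1 \<subseteq> B - {v}" using B(1) assms(3) spF1 span_base by blast
  then have "\<forall>a\<in>span F1. \<phi> \<bullet> a = 0"
    using \<phi>(3) orthogonal_to_span unfolding orthogonal_def by (metis inner_commute subsetD)
  with \<phi> spF1 show ?thesis by auto
qed

definition is_bar_pi :: "(real^'n) set \<Rightarrow> real^'n \<Rightarrow> (real^'n) set \<Rightarrow> bool" where
  "is_bar_pi L v C \<longleftrightarrow> (\<exists>u \<in> lattice_pts. C = qcoset L u
       \<and> (\<exists>t::real. t > 0 \<and> u - t *\<^sub>R v \<in> L)
       \<and> u \<notin> L
       \<and> \<not> (\<exists>u' \<in> lattice_pts. \<exists>k::int. k \<ge> 2 \<and> u - of_int k *\<^sub>R u' \<in> L))"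

lemma bar_pi_eq_The: "bar_pi L v = (THE C. is_bar_pi L v C)"
  unfolding bar_pi_def is_bar_pi_def by simp

lemma qcoset_eq:
  assumes "subspace L" "u - u' \<in> L"
  shows "qcoset L u = qcoset L u'"
proof -
  have "w - u \<in> L \<longleftrightarrow> w - u' \<in> L" for w
    using subspace_add[OF assms(1) _ assms(2), of "w - u"] subspace_diff[OF assms(1) _ assms(2), of "w - u'"]
    by auto
  then show ?thesis unfolding qcoset_def by auto
qed

text \<open>The parameters \<open>t\<close> lie in \<open>(1/a) \<int>\<close> for \<open>a = |\<phi> \<bullet> v|\<close>, \<open>\<phi>\<close> an integral functional
  vanishing on \<open>span F\<close>, so there is a least one.\<close>
lemma lattice_ray_least_parameter:
  fixes F :: "(real^'n) set"
  assumes "F \<subseteq> lattice_pts" "v \<in> lattice_pts" "v \<notin> span F"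
  shows "\<exists>t0>0. (\<exists>u\<in>lattice_pts. u - t0 *\<^sub>R v \<in> span F)
    \<and> (\<forall>t u. t > 0 \<longrightarrow> u \<in> lattice_pts \<longrightarrow> u - t *\<^sub>R v \<in> span F \<longrightarrow> t0 \<le> t)"
proof -
  obtain \<phi> where \<phi>: "\<phi> \<in> lattice_pts" "\<forall>a\<in>span F. \<phi> \<bullet> a = 0" "\<phi> \<bullet> v \<noteq> 0"
    using lattice_separating_functional[OF assms] by blast
  define a where "a = \<bar>\<phi> \<bullet> v\<bar>"
  have "a > 0" using \<phi>(3) a_def by simp
  define G where "G t \<longleftrightarrow> (\<exists>u\<in>lattice_pts. u - t *\<^sub>R v \<in> span F)" for t
  have G_grid: "\<exists>n::nat. n > 0 \<and> t = real n / a" if "t > 0" "G t" for t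
  proof -
    obtain u where u: "u \<in> lattice_pts" "u - t *\<^sub>R v \<in> span F" using \<open>G t\<close> G_def by blast
    then have "\<phi> \<bullet> (u - t *\<^sub>R v) = 0" using \<phi>(2) by blast
    then have "\<phi> \<bullet> u = t * (\<phi> \<bullet> v)" by (simp add: inner_diff_right)
    then have "t * a \<in> \<int>"
      using lattice_pts_inner[OF \<phi>(1) u(1)] unfolding a_def
      by (cases "\<phi> \<bullet> v \<ge> 0") (auto simp: abs_if Ints_minus[of "t * (\<phi> \<bullet> v)", simplified])
    then obtain z where z: "t * a = of_int z" by (auto elim: Ints_cases)
    then have "z > 0" using \<open>t > 0\<close> \<open>a > 0\<close> by (metis mult_pos_pos of_int_0_less_iff)
    with z \<open>a > 0\<close> show ?thesis by (intro exI[of _ "nat z"]) (simp add: field_simps)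
  qed
  define P where "P n \<longleftrightarrow> n > 0 \<and> G (real n / a)" for n :: nat
  have "G 1" unfolding G_def using assms(2) by (intro bexI[of _ v]) (auto simp: span_zero)
  moreover obtain n1 where "n1 > 0" "1 = real n1 / a" using G_grid[OF _ \<open>G 1\<close>] by auto
  ultimately have "P n1" unfolding P_def by simp
  define t0 where "t0 = real (LEAST n. P n) / a"
  have "P (LEAST n. P n)" using \<open>P n1\<close> by (rule LeastI)
  then have "t0 > 0" "G t0" unfolding P_def t0_def using \<open>a > 0\<close> by auto
  moreover have "t0 \<le> t" if t: "t > 0" "G t" for t
  proof -
    obtain n where "n > 0" "t = real n / a" using G_grid[OF t] by blast
    moreover have "(LEAST n. P n) \<le> n" using t calculation unfolding P_def by (intro Least_le) simp
    ultimately show ?thesis unfolding t0_def using \<open>a > 0\<close> by (simp add: divide_right_mono)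
  qed
  ultimately show ?thesis unfolding G_def by blast
qed

lemma is_bar_pi_least_parameter:
  assumes L: "subspace L" "v \<notin> L"
    and u0: "t0 > 0" "u0 \<in> lattice_pts" "u0 - t0 *\<^sub>R v \<in> L"
    and least: "\<And>t u. t > 0 \<Longrightarrow> u \<in> lattice_pts \<Longrightarrow> u - t *\<^sub>R v \<in> L \<Longrightarrow> t0 \<le> t"
  shows "is_bar_pi L v (qcoset L u0)"
  unfolding is_bar_pi_def
proof (intro bexI[of _ u0] conjI notI)
  assume "u0 \<in> L"
  then have "(1 / t0) *\<^sub>R (u0 - (u0 - t0 *\<^sub>R v)) \<in> L"
    by (rule subspace_mul[OF L(1) subspace_diff[OF L(1) _ u0(3)]])
  then show False using L(2) u0(1) by simp
next
  assume "\<exists>u'\<in>lattice_pts. \<exists>k::int. 2 \<le> k \<and> u0 - of_int k *\<^sub>R u' \<in> L"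
  then obtain u' and k :: int where k: "u' \<in> lattice_pts" "2 \<le> k" "u0 - of_int k *\<^sub>R u' \<in> L"
    by blast
  have "(1 / of_int k) *\<^sub>R ((u0 - t0 *\<^sub>R v) - (u0 - of_int k *\<^sub>R u')) \<in> L"
    by (rule subspace_mul[OF L(1) subspace_diff[OF L(1) u0(3) k(3)]])
  moreover have "(1 / of_int k) *\<^sub>R ((u0 - t0 *\<^sub>R v) - (u0 - of_int k *\<^sub>R u')) = u' - (t0 / of_int k) *\<^sub>R v"
    using k(2) by (simp add: algebra_simps)
  ultimately have "t0 \<le> t0 / of_int k" using least[of "t0 / of_int k" u'] k(1,2) u0(1) by simp
  moreover have "t0 / of_int k < t0" using k(2) u0(1) by (simp add: divide_less_eq)
  ultimately show False by simp
qed (use u0 in auto)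

text \<open>Division with remainder by the least parameter \<open>t0\<close>: the remainder vanishes by
  minimality, and the quotient is \<open>1\<close> by primitivity.\<close>
lemma is_bar_pi_unique:
  assumes L: "subspace L"
    and u0: "t0 > 0" "u0 \<in> lattice_pts" "u0 - t0 *\<^sub>R v \<in> L"
    and least: "\<And>t u. t > 0 \<Longrightarrow> u \<in> lattice_pts \<Longrightarrow> u - t *\<^sub>R v \<in> L \<Longrightarrow> t0 \<le> t"
    and C: "is_bar_pi L v C"
  shows "C = qcoset L u0"
proof -
  obtain u t where u: "u \<in> lattice_pts" "C = qcoset L u" "t > 0" "u - t *\<^sub>R v \<in> L"
    and prim: "\<not> (\<exists>u'\<in>lattice_pts. \<exists>k::int. 2 \<le> k \<and> u - of_int k *\<^sub>R u' \<in> L)"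
    using C unfolding is_bar_pi_def by blast
  define m where "m = \<lfloor>t / t0\<rfloor>"
  define r where "r = t - of_int m * t0"
  have "of_int m \<le> t / t0" "t / t0 < of_int m + 1" unfolding m_def by linarith+
  then have r: "0 \<le> r" "r < t0" unfolding r_def using u0(1) by (simp_all add: field_simps)
  have "1 \<le> m" unfolding m_def using least[OF u(3,1,4)] u0(1) by (simp add: le_floor_iff)
  have "(u - t *\<^sub>R v) - of_int m *\<^sub>R (u0 - t0 *\<^sub>R v) \<in> L"
    by (rule subspace_diff[OF L u(4) subspace_mul[OF L u0(3)]])
  moreover have "(u - t *\<^sub>R v) - of_int m *\<^sub>R (u0 - t0 *\<^sub>R v) = (u - of_int m *\<^sub>R u0) - r *\<^sub>R v"
    unfolding r_def by (simp add: algebra_simps)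
  ultimately have rem: "(u - of_int m *\<^sub>R u0) - r *\<^sub>R v \<in> L" by simp
  have "r = 0"
  proof (rule ccontr)
    assume "r \<noteq> 0"
    then have "t0 \<le> r"
      using least[of r "u - of_int m *\<^sub>R u0"] r(1) rem u(1) u0(2)
      by (simp add: lattice_pts_diff lattice_pts_scale)
    with r(2) show False by simp
  qed
  with rem have "u - of_int m *\<^sub>R u0 \<in> L" by simp
  moreover have "m = 1"
  proof (rule ccontr)
    assume "m \<noteq> 1"
    with \<open>1 \<le> m\<close> have "2 \<le> m" by simp
    with prim u0(2) \<open>u - of_int m *\<^sub>R u0 \<in> L\<close> show False by blast
  qed
  ultimately have "u - u0 \<in> L" by simp
  then show ?thesis using u(2) qcoset_eq[OF L] by simp
qed

lemma is_bar_pi_bar_pi: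
  fixes F :: "(real^'n) set"
  assumes "F \<subseteq> lattice_pts" "v \<in> lattice_pts" "v \<notin> span F"
  shows "is_bar_pi (span F) v (bar_pi (span F) v)"
proof -
  obtain t0 u0 where u0: "t0 > 0" "u0 \<in> lattice_pts" "u0 - t0 *\<^sub>R v \<in> span F"
    and least: "\<And>t u. t > 0 \<Longrightarrow> u \<in> lattice_pts \<Longrightarrow> u - t *\<^sub>R v \<in> span F \<Longrightarrow> t0 \<le> t"
    using lattice_ray_least_parameter[OF assms] by blast
  have "\<exists>!C. is_bar_pi (span F) v C"
  proof (rule ex1I)
    show "is_bar_pi (span F) v (qcoset (span F) u0)"
      by (rule is_bar_pi_least_parameter[OF subspace_span assms(3) u0 least])
    show "C = qcoset (span F) u0" if "is_bar_pi (span F) v C" for C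
      by (rule is_bar_pi_unique[OF subspace_span u0 least that])
  qed
  then show ?thesis unfolding bar_pi_eq_The by (rule theI')
qed

lemma bar_pi_eqD:
  fixes F :: "(real^'n) set"
  assumes F: "F \<subseteq> lattice_pts" and x: "x \<in> lattice_pts" "x \<notin> span F"
    and y: "y \<in> lattice_pts" "y \<notin> span F"
    and eq: "bar_pi (span F) x = bar_pi (span F) y"
  shows "\<exists>s>0. x - s *\<^sub>R y \<in> span F"
proof -
  obtain u1 t1 where 1: "u1 \<in> lattice_pts" "bar_pi (span F) x = qcoset (span F) u1"
      "t1 > 0" "u1 - t1 *\<^sub>R x \<in> span F"
    using is_bar_pi_bar_pi[OF F x] unfolding is_bar_pi_def by blast
  obtain u2 t2 where 2: "u2 \<in> lattice_pts" "bar_pi (span F) y = qcoset (span F) u2"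
      "t2 > 0" "u2 - t2 *\<^sub>R y \<in> span F"
    using is_bar_pi_bar_pi[OF F y] unfolding is_bar_pi_def by blast
  have "u1 \<in> qcoset (span F) u2" using 1(1,2) 2(2) eq unfolding qcoset_def by (simp add: span_zero)
  then have "u1 - u2 \<in> span F" unfolding qcoset_def by simp
  then have "(1 / t1) *\<^sub>R ((u2 - t2 *\<^sub>R y) + (u1 - u2) - (u1 - t1 *\<^sub>R x)) \<in> span F"
    by (rule span_scale[OF span_diff[OF span_add[OF 2(4)] 1(4)]])
  moreover have "(1 / t1) *\<^sub>R ((u2 - t2 *\<^sub>R y) + (u1 - u2) - (u1 - t1 *\<^sub>R x)) = x - (t2 / t1) *\<^sub>R y"
    using 1(3) by (simp add: algebra_simps)
  ultimately show ?thesis using 1(3) 2(3) by (intro exI[of _ "t2 / t1"]) auto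
qed

definition mori_link :: "(real^'n) set \<times> (real^'n) set \<Rightarrow> (real^'n) set \<times> (real^'n) set \<Rightarrow> bool" where
  "mori_link P Q \<longleftrightarrow> mori_fiber_pgs P \<and> mori_fiber_pgs Q \<and> elementary_link P Q"

lemma symp_mori_link: "symp mori_link"
  unfolding symp_def mori_link_def elementary_link_def by blast

lemma mori_link_rtranclp_sym: "mori_link\<^sup>*\<^sup>* P Q \<Longrightarrow> mori_link\<^sup>*\<^sup>* Q P"
  using symp_rtranclp[OF symp_mori_link] by (rule sympD)

lemma links_sequence_Cons_Cons:
  "links_sequence (P # Q # xs) \<longleftrightarrow> mori_fiber_pgs P \<and> elementary_link P Q \<and> links_sequence (Q # xs)"
  unfolding links_sequence_def by (auto simp: All_less_Suc2)

lemma links_sequence_if_rtranclp: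
  assumes "mori_link\<^sup>*\<^sup>* P Q" "mori_fiber_pgs P"
  shows "\<exists>xs. links_sequence xs \<and> hd xs = P \<and> last xs = Q"
  using assms
proof (induction rule: converse_rtranclp_induct)
  case base
  then show ?case by (intro exI[of _ "[Q]"]) (simp add: links_sequence_def)
next
  case (step P R)
  then obtain xs where xs: "links_sequence xs" "hd xs = R" "last xs = Q"
    unfolding mori_link_def by blast
  then obtain ys where "xs = R # ys" unfolding links_sequence_def by (cases xs) auto
  with xs step.hyps(1) show ?case
    by (intro exI[of _ "P # xs"]) (auto simp: links_sequence_Cons_Cons mori_link_def)
qed

section \<open>Mori fiber primitive generating sets with a fixed fiber\<close>

lemma pgs_UNIV_span: "pgs UNIV X \<Longrightarrow> span X = UNIV"
  by (simp add: pgs_iff convex_cone_hull_eq_UNIV_imp_span)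

lemma pgs_UNIV_nonempty: "pgs UNIV X \<Longrightarrow> X \<noteq> {}"
  by (auto simp: pgs_iff)

lemma pgs_UNIV_superset:
  "pgs UNIV X \<Longrightarrow> X \<subseteq> Y \<Longrightarrow> finite Y \<Longrightarrow> \<forall>y\<in>Y. primitive y \<Longrightarrow> pgs UNIV Y"
  unfolding pgs_iff by (metis hull_mono top.extremum_uniqueI)

lemma fiber_structure_intro:
  "pgs UNIV X \<Longrightarrow> pgs (span F) F \<Longrightarrow> F \<noteq> {} \<Longrightarrow> F = span F \<inter> X \<Longrightarrow> fiber_structure F X"
  unfolding fiber_structure_def by (simp add: pgs_UNIV_span)

lemma fiber_structure_self: "pgs UNIV X \<Longrightarrow> fiber_structure X X"
  by (intro fiber_structure_intro) (auto simp: pgs_UNIV_span pgs_UNIV_nonempty)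

lemma card_eq_add_card_base_iff:
  assumes "finite X" "F \<subseteq> X"
  shows "card X = card F + card (base F X) \<longleftrightarrow> inj_on (bar_pi (span F)) (X - F)"
proof -
  have "card (X - F) = card X - card F" "card F \<le> card X"
    using assms finite_subset card_Diff_subset card_mono by metis+
  then show ?thesis
    unfolding base_def using assms(1) by (metis add_diff_cancel_left' card_image eq_card_imp_inj_on finite_Diff le_add_diff_inverse)
qed

lemma mori_fiber_pgs_iff:
  "mori_fiber_pgs (F, X) \<longleftrightarrow> pgs UNIV X \<and> pgs (span F) F \<and> card F = dim (span F) + 1
     \<and> F = span F \<inter> X \<and> inj_on (bar_pi (span F)) (X - F)"
proof -
  have "finite X" if "pgs UNIV X" using that by (simp add: pgs_iff)
  moreover have "F \<noteq> {}" if "card F = dim (span F) + 1" using that by auto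
  ultimately show ?thesis
    unfolding mori_fiber_pgs_def mori_fs_def irreducible_fs_def
    using card_eq_add_card_base_iff fiber_structure_intro unfolding fiber_structure_def
    by (metis Int_lower2 fst_conv snd_conv)
qed

lemma reduction_UNIV:
  "pgs UNIV A \<Longrightarrow> pgs UNIV B \<Longrightarrow> B \<subseteq> A \<Longrightarrow> card A = card B + 1 \<Longrightarrow> reduction A B"
  unfolding reduction_def by blast

lemma mori_link_delete:
  assumes M: "mori_fiber_pgs (F, X)" and w: "w \<in> X - F" and X': "pgs UNIV (X - {w})"
  shows "mori_link (F, X) (F, X - {w})"
proof -
  have X: "pgs UNIV X" "F = span F \<inter> X" "inj_on (bar_pi (span F)) (X - F)"
    using M by (auto simp: mori_fiber_pgs_iff)
  moreover have "inj_on (bar_pi (span F)) (X - {w} - F)" using X(3) by (rule inj_on_subset) blast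
  ultimately have "mori_fiber_pgs (F, X - {w})"
    using M X' w by (auto simp: mori_fiber_pgs_iff)
  moreover have "card X = card (X - {w}) + 1"
    using X(1) w card_Suc_Diff1[of X w] unfolding pgs_iff by (metis DiffD1 Suc_eq_plus1)
  with X(1) X' have "reduction X (X - {w})" by (intro reduction_UNIV) auto
  then have "link_dir (F, X) (F, X - {w})" unfolding link_dir_def by simp
  ultimately show ?thesis using M unfolding mori_link_def elementary_link_def by blast
qed

lemma mori_link_insert:
  assumes M: "mori_fiber_pgs (F, X)" and b: "primitive b" "b \<notin> span F"
    and new: "bar_pi (span F) b \<notin> bar_pi (span F) ` (X - F)"
  shows "mori_link (F, X) (F, insert b X)"
proof -
  have X: "pgs UNIV X" "F = span F \<inter> X" "inj_on (bar_pi (span F)) (X - F)"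
    using M by (auto simp: mori_fiber_pgs_iff)
  have "b \<notin> X"
  proof
    assume "b \<in> X"
    then have "b \<in> X - F" using b(2) X(2) by blast
    with new show False by blast
  qed
  have "finite (insert b X)" "\<forall>x\<in>insert b X. primitive x" using X(1) b(1) by (auto simp: pgs_iff)
  then have bX: "pgs UNIV (insert b X)" using pgs_UNIV_superset[OF X(1)] by blast
  have "insert b X - F = insert b (X - F)" using b(2) span_base by blast
  then have "inj_on (bar_pi (span F)) (insert b X - F)" using X(3) new \<open>b \<notin> X\<close> by simp
  moreover have "F = span F \<inter> insert b X" using X(2) b(2) by blast
  ultimately have "mori_fiber_pgs (F, insert b X)"
    using M bX by (simp add: mori_fiber_pgs_iff)
  moreover have "b \<in> insert b X - F" "insert b X - {b} = X"
    using b(2) \<open>b \<notin> X\<close> span_base by auto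
  ultimately have "mori_link (F, insert b X) (F, X)"
    using mori_link_delete[of F "insert b X" b] X(1) by simp
  then show ?thesis by (rule sympD[OF symp_mori_link])
qed

text \<open>Since \<open>- (b - s w)\<close> lies in the cone of \<open>F\<close>, the vector \<open>w\<close> stays in the cone after the exchange.\<close>
lemma pgs_UNIV_exchange:
  assumes X: "pgs UNIV X" and F: "F \<subseteq> X - {w}" "convex_cone hull F = span F"
    and b: "primitive b" and s: "s > 0" "b - s *\<^sub>R w \<in> span F"
  shows "pgs UNIV (insert b (X - {w}))"
proof -
  let ?X' = "insert b (X - {w})"
  have "F \<subseteq> ?X'" using F(1) by blast
  then have "convex_cone hull F \<subseteq> convex_cone hull ?X'" by (rule hull_mono)
  moreover have "- (b - s *\<^sub>R w) \<in> convex_cone hull F" using F(2) span_neg[OF s(2)] by simp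
  ultimately have neg: "- (b - s *\<^sub>R w) \<in> convex_cone hull ?X'" by blast
  have "b \<in> convex_cone hull ?X'" by (simp add: hull_inc)
  then have "(1 / s) *\<^sub>R (b + - (b - s *\<^sub>R w)) \<in> convex_cone hull ?X'"
    by (rule convex_cone_hull_mul[OF convex_cone_hull_add[OF _ neg]]) (use s(1) in simp)
  then have "w \<in> convex_cone hull ?X'" using s(1) by simp
  then have "X \<subseteq> convex_cone hull ?X'" using hull_subset[of ?X' convex_cone] by blast
  then have "convex_cone hull X \<subseteq> convex_cone hull ?X'"
    by (intro hull_minimal convex_cone_convex_cone_hull)
  then show ?thesis using X b unfolding pgs_iff by auto
qed

text \<open>The exchange is a link of type II\<open>ni\<close> through \<open>insert b X\<close>.\<close>
lemma mori_link_exchange: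
  assumes M: "mori_fiber_pgs (F, X)" and w: "w \<in> X - F"
    and b: "primitive b" "b \<notin> X" "b \<notin> span F" and eq: "bar_pi (span F) b = bar_pi (span F) w"
  shows "mori_link (F, X) (F, insert b (X - {w}))"
proof -
  define X' where "X' = insert b (X - {w})"
  have X: "pgs UNIV X" "F = span F \<inter> X" "inj_on (bar_pi (span F)) (X - F)"
    and F: "pgs (span F) F" "card F = dim (span F) + 1"
    using M by (auto simp: mori_fiber_pgs_iff)
  have "F \<subseteq> lattice_pts" "w \<in> lattice_pts" "w \<notin> span F"
    using F(1) X w primitive_lattice_pts unfolding pgs_iff by blast+
  then obtain s where s: "s > 0" "b - s *\<^sub>R w \<in> span F"
    using bar_pi_eqD b primitive_lattice_pts eq by metis
  have "F \<subseteq> X - {w}" using X(2) w by blast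
  moreover have "convex_cone hull F = span F" using F(1) by (simp add: pgs_iff)
  ultimately have X'_pgs: "pgs UNIV X'"
    unfolding X'_def using pgs_UNIV_exchange[OF X(1) _ _ b(1) s] by blast
  have "X' - F = insert b (X - F - {w})" using b(3) span_base unfolding X'_def by blast
  moreover have "bar_pi (span F) b \<notin> bar_pi (span F) ` (X - F - {w})"
    using X(3) w eq by (auto dest: inj_onD)
  ultimately have "mori_fiber_pgs (F, X')"
    using X'_pgs F X w b(3) by (auto simp: mori_fiber_pgs_iff X'_def inj_on_diff)
  moreover have "fiber_structure F (insert b X)" "reduction (insert b X) X" "reduction (insert b X) X'"
  proof -
    have "finite (insert b X)" "\<forall>x\<in>insert b X. primitive x" using X(1) b(1) by (auto simp: pgs_iff)
    then have bX: "pgs UNIV (insert b X)" using pgs_UNIV_superset[OF X(1)] by blast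
    have "F \<noteq> {}" using F(2) by auto
    then show "fiber_structure F (insert b X)"
      using X(2) b(3) by (intro fiber_structure_intro[OF bX F(1)]) auto
    have "finite X" using X(1) by (simp add: pgs_iff)
    then have "card (insert b X) = card X + 1" "card X = card X'"
      using b(2) w card_Suc_Diff1[of X w] unfolding X'_def by simp_all
    then show "reduction (insert b X) X" "reduction (insert b X) X'"
      using bX X(1) X'_pgs unfolding X'_def by (auto intro!: reduction_UNIV)
  qed
  ultimately have "link_dir (F, X) (F, X')" unfolding link_dir_def by auto
  with M \<open>mori_fiber_pgs (F, X')\<close> show ?thesis
    unfolding mori_link_def elementary_link_def X'_def by blast
qed

lemma mori_link_delete_towards:
  assumes MX: "mori_fiber_pgs (F, X)" and MY: "mori_fiber_pgs (F, Y)" and w: "w \<in> X" "Y \<subseteq> X - {w}"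
  shows "mori_link (F, X) (F, X - {w})"
proof -
  have "finite (X - {w})" "\<forall>x\<in>X - {w}. primitive x" "pgs UNIV Y"
    using MX MY by (auto simp: mori_fiber_pgs_iff pgs_iff)
  then have "pgs UNIV (X - {w})" using pgs_UNIV_superset w(2) by blast
  moreover have "F \<subseteq> Y" using MY unfolding mori_fiber_pgs_iff by (metis Int_lower2)
  then have "w \<in> X - F" using w by blast
  ultimately show ?thesis by (rule mori_link_delete[OF MX, rotated])
qed

lemma mori_link_add_towards:
  assumes MX: "mori_fiber_pgs (F, X)" and MY: "mori_fiber_pgs (F, Y)" and b: "b \<in> Y" "b \<notin> X"
  shows "\<exists>X'. mori_link (F, X) (F, X') \<and> X' - Y \<subseteq> X - Y \<and> Y - X' = (Y - X) - {b}"
proof -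
  have Y: "\<forall>y\<in>Y. primitive y" "F = span F \<inter> Y" "inj_on (bar_pi (span F)) (Y - F)"
    using MY by (simp_all add: mori_fiber_pgs_iff pgs_iff)
  have "F \<subseteq> X" using MX unfolding mori_fiber_pgs_iff by (metis Int_lower2)
  have "b \<notin> span F"
  proof
    assume "b \<in> span F"
    with b(1) Y(2) have "b \<in> F" by blast
    with b(2) \<open>F \<subseteq> X\<close> show False by blast
  qed
  have "primitive b" using b(1) Y(1) by blast
  show ?thesis
  proof (cases "bar_pi (span F) b \<in> bar_pi (span F) ` (X - F)")
    case True
    then obtain w where w: "w \<in> X - F" "bar_pi (span F) b = bar_pi (span F) w" by auto
    have "w \<notin> Y"
    proof
      assume "w \<in> Y"
      moreover have "b \<in> Y - F" using b(1) \<open>b \<notin> span F\<close> span_base by blast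
      ultimately have "w = b" using Y(3) w by (metis DiffD2 DiffI inj_onD)
      with w b show False by blast
    qed
    then have "insert b (X - {w}) - Y \<subseteq> X - Y" "Y - insert b (X - {w}) = (Y - X) - {b}"
      using b by auto
    moreover have "mori_link (F, X) (F, insert b (X - {w}))"
      using mori_link_exchange[OF MX w(1) \<open>primitive b\<close> b(2) \<open>b \<notin> span F\<close> w(2)] .
    ultimately show ?thesis by blast
  next
    case False
    then have "mori_link (F, X) (F, insert b X)"
      using mori_link_insert[OF MX \<open>primitive b\<close> \<open>b \<notin> span F\<close>] by blast
    moreover have "insert b X - Y = X - Y" "Y - insert b X = (Y - X) - {b}" using b by auto
    ultimately show ?thesis by (metis order_refl)
  qed
qed

lemma mori_link_fixed_fiber:
  assumes "mori_fiber_pgs (F, X)" "mori_fiber_pgs (F, Y)"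
  shows "mori_link\<^sup>*\<^sup>* (F, X) (F, Y)"
  using assms
proof (induction "card (X - Y) + card (Y - X)" arbitrary: X rule: less_induct)
  case less
  have fin: "finite X" "finite Y" using less.prems by (simp_all add: mori_fiber_pgs_iff pgs_iff)
  have "\<exists>X'. mori_link (F, X) (F, X') \<and> card (X' - Y) + card (Y - X') < card (X - Y) + card (Y - X)"
    if "X \<noteq> Y"
  proof (cases "Y \<subseteq> X")
    case True
    with \<open>X \<noteq> Y\<close> obtain w where w: "w \<in> X" "w \<notin> Y" by blast
    then have "mori_link (F, X) (F, X - {w})" using mori_link_delete_towards less.prems True by blast
    moreover have "card ((X - Y) - {w}) < card (X - Y)" using w fin by (intro card_Diff1_less) auto
    moreover have "X - {w} - Y = (X - Y) - {w}" "Y - (X - {w}) = Y - X" using w by auto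
    ultimately show ?thesis by (intro exI[of _ "X - {w}"]) simp
  next
    case False
    then obtain b where b: "b \<in> Y" "b \<notin> X" by blast
    then obtain X' where X': "mori_link (F, X) (F, X')" "X' - Y \<subseteq> X - Y" "Y - X' = (Y - X) - {b}"
      using mori_link_add_towards less.prems by blast
    have "card (X' - Y) \<le> card (X - Y)" using X'(2) fin by (intro card_mono) auto
    moreover have "card ((Y - X) - {b}) < card (Y - X)" using b fin by (intro card_Diff1_less) auto
    ultimately show ?thesis using X' by (intro exI[of _ X']) simp
  qed
  then show ?case
    using less by (metis mori_link_def converse_rtranclp_into_rtranclp rtranclp.rtrancl_refl)
qed

section \<open>Simplicial primitive generating sets\<close>

definition simplex_pgs :: "(real^'n) set \<Rightarrow> bool" where
  "simplex_pgs S \<longleftrightarrow> pgs UNIV S \<and> card S = CARD('n) + 1"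

lemma simplex_pgs_mori: "simplex_pgs S \<Longrightarrow> mori_fiber_pgs (S, S)"
  unfolding simplex_pgs_def mori_fiber_pgs_iff by (simp add: pgs_UNIV_span)

lemma simplex_pgs_no_relation:
  fixes S :: "(real^'n) set"
  assumes S: "simplex_pgs S" and b: "b \<in> S" "b' \<in> S" "b \<noteq> b'" and s: "0 \<le> s"
  shows "b - s *\<^sub>R b' \<notin> span (S - {b, b'})"
proof
  assume rel: "b - s *\<^sub>R b' \<in> span (S - {b, b'})"
  have S': "finite S" "convex_cone hull S = UNIV" "card S = CARD('n) + 1"
    using S unfolding simplex_pgs_def pgs_iff by auto
  have "dim (S - {b, b'}) \<le> card (S - {b, b'})" using S'(1) by (intro dim_le_card') simp
  also have "\<dots> < CARD('n)" using S' b by (simp add: card_Diff_subset)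
  finally obtain n :: "real^'n" where n: "n \<noteq> 0" "\<And>y. y \<in> span (S - {b, b'}) \<Longrightarrow> orthogonal n y"
    using orthogonal_to_subspace_exists[of "S - {b, b'}"] by auto
  define n' where "n' = (if 0 \<le> n \<bullet> b' then n else - n)"
  have "n' \<noteq> 0" using n(1) by (simp add: n'_def)
  have "0 \<le> n' \<bullet> b'" by (simp add: n'_def)
  moreover have "n' \<bullet> (b - s *\<^sub>R b') = 0" using n(2)[OF rel] by (simp add: n'_def orthogonal_def)
  ultimately have "0 \<le> n' \<bullet> b" using s by (simp add: inner_diff_right)
  moreover have "n' \<bullet> t = 0" if "t \<in> S - {b, b'}" for t
    using n(2)[OF span_base[OF that]] by (simp add: n'_def orthogonal_def)
  ultimately have "\<And>t. t \<in> S \<Longrightarrow> 0 \<le> n' \<bullet> t" using \<open>0 \<le> n' \<bullet> b'\<close> by (metis DiffI empty_iff insertE order_refl)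
  then show False using convex_cone_hull_eq_UNIV_imp_normal_eq_0[OF S'(2)] \<open>n' \<noteq> 0\<close> by blast
qed

lemma mori_link_reduction_simplex:
  fixes A :: "(real^'n) set"
  assumes M: "mori_fiber_pgs (F, A)" and A: "card A = CARD('n) + 2" and S: "S \<subseteq> A" "simplex_pgs S"
  shows "mori_link (F, A) (S, S)"
proof -
  have "pgs UNIV A" "mori_fs F A" using M by (simp_all add: mori_fiber_pgs_def)
  moreover have "reduction A S" using A S \<open>pgs UNIV A\<close> by (intro reduction_UNIV) (auto simp: simplex_pgs_def)
  ultimately have "link_dir (F, A) (S, S)" unfolding link_dir_def using fiber_structure_self by auto
  then show ?thesis using M simplex_pgs_mori[OF S(2)] by (simp add: mori_link_def elementary_link_def)
qed

lemma simplex_pgs_not_in_span_subset: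
  fixes S :: "(real^'n) set"
  assumes S: "simplex_pgs S" and F1: "F1 \<subseteq> S" "card F1 < CARD('n)" and x: "x \<in> S - F1"
  shows "x \<notin> span F1"
proof
  assume "x \<in> span F1"
  have "finite S" "card S = CARD('n) + 1" using S by (auto simp: simplex_pgs_def pgs_iff)
  then have "card (S - F1) = card S - card F1" using F1(1) by (meson card_Diff_subset finite_subset)
  then have "2 \<le> card (S - F1)" using F1(2) \<open>card S = CARD('n) + 1\<close> by linarith
  have "\<not> S - F1 \<subseteq> {x}"
  proof
    assume "S - F1 \<subseteq> {x}"
    then have "card (S - F1) \<le> 1" using card_mono[of "{x}" "S - F1"] by simp
    with \<open>2 \<le> card (S - F1)\<close> show False by simp
  qed
  then obtain y where "y \<in> S - F1" "y \<noteq> x" by blast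
  then have "span F1 \<subseteq> span (S - {x, y})" using F1(1) x by (intro span_mono) blast
  with \<open>x \<in> span F1\<close> \<open>y \<in> S - F1\<close> \<open>y \<noteq> x\<close> x show False
    using simplex_pgs_no_relation[OF S, of x y 0] by auto
qed

lemma simplex_pgs_inj_on_bar_pi:
  fixes S :: "(real^'n) set"
  assumes S: "simplex_pgs S" and F1: "F1 \<subseteq> S" "card F1 < CARD('n)"
    and F: "F \<subseteq> lattice_pts" "span F = span F1"
  shows "inj_on (bar_pi (span F)) (S - F1)"
proof (rule inj_onI, rule ccontr)
  fix x y assume xy: "x \<in> S - F1" "y \<in> S - F1" "bar_pi (span F) x = bar_pi (span F) y" "x \<noteq> y"
  then have "x \<in> lattice_pts" "y \<in> lattice_pts"
    using S primitive_lattice_pts unfolding simplex_pgs_def pgs_iff by auto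
  moreover have "x \<notin> span F" "y \<notin> span F"
    using simplex_pgs_not_in_span_subset[OF S F1] xy(1,2) F(2) by auto
  ultimately obtain s where "s > 0" "x - s *\<^sub>R y \<in> span F1"
    using bar_pi_eqD[OF F(1)] xy(3) F(2) by metis
  moreover have "span F1 \<subseteq> span (S - {x, y})" using F1(1) xy(1,2) by (intro span_mono) blast
  ultimately show False using simplex_pgs_no_relation[OF S, of x y s] xy by auto
qed

lemma mori_fiber_pgs_insert_simplex:
  fixes S :: "(real^'n) set"
  assumes S: "simplex_pgs S" and F1: "F1 \<subseteq> S" "card F1 < CARD('n)"
    and F: "pgs (span F) F" "card F = dim (span F) + 1" "F = insert f F1" "f \<notin> F1" "f \<in> span F1"
  shows "f \<notin> S \<and> mori_fiber_pgs (F, insert f S)"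
proof -
  have S': "pgs UNIV S" "finite S" using S by (auto simp: simplex_pgs_def pgs_iff)
  have "span F = span F1" using F(3,5) by (simp add: span_redundant)
  note out = simplex_pgs_not_in_span_subset[OF S F1]
  have "f \<notin> S" using out F(4,5) by blast
  have "F \<subseteq> lattice_pts" using F(1) primitive_lattice_pts by (auto simp: pgs_iff)
  then have "inj_on (bar_pi (span F)) (S - F1)"
    using simplex_pgs_inj_on_bar_pi[OF S F1] \<open>span F = span F1\<close> by blast
  moreover have "insert f S - F = S - F1" using \<open>f \<notin> S\<close> F(3) by auto
  moreover have "F = span F \<inter> insert f S"
    using out F(3) \<open>span F = span F1\<close> span_superset[of F] F1(1) by auto
  moreover have "pgs UNIV (insert f S)"
    using F(1,3) S'(1,2) by (intro pgs_UNIV_superset[OF S'(1)]) (auto simp: pgs_iff)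
  ultimately show ?thesis using F(1,2) \<open>f \<notin> S\<close> by (simp add: mori_fiber_pgs_iff)
qed

lemma primitive_uminus_neq: "primitive u \<Longrightarrow> - u \<noteq> u"
proof
  assume "primitive u" "- u = u"
  then have "(2::real) *\<^sub>R u = 0" by (metis add.left_inverse scaleR_2)
  with \<open>primitive u\<close> show False by (simp add: primitive_nonzero)
qed

lemma pgs_antipodal_pair:
  assumes "primitive u"
  shows "pgs (span {u, - u}) {u, - u}" "card {u, - u} = dim (span {u, - u}) + 1"
proof -
  have "u \<noteq> 0" using assms by (rule primitive_nonzero)
  have "- u \<in> span {u}" by (rule span_neg[OF span_base]) simp
  then have sp: "span {u, - u} = span {u}" using span_redundant[of "- u" "{u}"] by (simp add: insert_commute)
  have "span {u} \<subseteq> convex_cone hull {u, - u}"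
  proof
    fix x assume "x \<in> span {u}"
    then obtain k where x: "x = k *\<^sub>R u" by (auto simp: span_singleton)
    show "x \<in> convex_cone hull {u, - u}"
    proof (cases "0 \<le> k")
      case True
      then show ?thesis unfolding x by (intro convex_cone_hull_mul hull_inc) auto
    next
      case False
      then have "(- k) *\<^sub>R (- u) \<in> convex_cone hull {u, - u}"
        by (intro convex_cone_hull_mul hull_inc) auto
      then show ?thesis unfolding x by simp
    qed
  qed
  then show "pgs (span {u, - u}) {u, - u}"
    using sp convex_cone_hull_subset_span[of "{u, - u}"] assms primitive_uminus by (auto simp: pgs_iff)
  show "card {u, - u} = dim (span {u, - u}) + 1"
  proof -
    have "u \<noteq> - u" using primitive_uminus_neq[OF assms] by metis
    then show ?thesis using \<open>u \<noteq> 0\<close> by (simp add: sp)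
  qed
qed

lemma mori_link_antipodal_simplex:
  fixes S :: "(real^'n) set"
  assumes d: "2 \<le> CARD('n)" and S: "simplex_pgs S" and u: "u \<in> S"
  shows "\<exists>A. mori_fiber_pgs ({u, - u}, A) \<and> mori_link ({u, - u}, A) (S, S)"
proof -
  have "primitive u" using S u by (auto simp: simplex_pgs_def pgs_iff)
  have F: "pgs (span {u, - u}) {u, - u}" "card {u, - u} = dim (span {u, - u}) + 1"
    using pgs_antipodal_pair[OF \<open>primitive u\<close>] by auto
  have "- u \<notin> {u}" using primitive_uminus_neq[OF \<open>primitive u\<close>] by blast
  moreover have "- u \<in> span {u}" by (rule span_neg[OF span_base]) simp
  moreover have "{u} \<subseteq> S" "card {u} < CARD('n)" "{u, - u} = insert (- u) {u}" using u d by auto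
  ultimately have "- u \<notin> S" "mori_fiber_pgs ({u, - u}, insert (- u) S)"
    using mori_fiber_pgs_insert_simplex[OF S _ _ F] by blast+
  moreover have "card (insert (- u) S) = CARD('n) + 2"
    using S \<open>- u \<notin> S\<close> by (auto simp: simplex_pgs_def pgs_iff)
  ultimately show ?thesis using mori_link_reduction_simplex[OF _ _ _ S] by blast
qed

lemma simplex_pgs_pivot:
  fixes S S' :: "(real^'n) set"
  assumes d: "2 \<le> CARD('n)" and S: "simplex_pgs S" "simplex_pgs S'"
    and u: "u \<in> S" "u \<in> S' \<or> - u \<in> S'"
  shows "mori_link\<^sup>*\<^sup>* (S, S) (S', S')"
proof -
  obtain u' where "u' \<in> S'" "{u', - u'} = {u, - u}"
  proof (cases "u \<in> S'")
    case False
    then show ?thesis using that[of "- u"] u(2) by auto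
  qed blast
  then obtain A' where A': "mori_fiber_pgs ({u, - u}, A')" "mori_link ({u, - u}, A') (S', S')"
    using mori_link_antipodal_simplex[OF d S(2)] by force
  obtain A where A: "mori_fiber_pgs ({u, - u}, A)" "mori_link ({u, - u}, A) (S, S)"
    using mori_link_antipodal_simplex[OF d S(1) u(1)] by blast
  have "mori_link (S, S) ({u, - u}, A)" using A(2) by (rule sympD[OF symp_mori_link])
  moreover have "mori_link\<^sup>*\<^sup>* ({u, - u}, A) ({u, - u}, A')" using A(1) A'(1) by (rule mori_link_fixed_fiber)
  ultimately show ?thesis
    using A'(2) by (simp add: converse_rtranclp_into_rtranclp rtranclp.rtrancl_into_rtrancl)
qed

text \<open>The extra vector is the primitive vector on the ray through \<open>-\<Sum>B\<close>.\<close>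
lemma simplex_pgs_insert_basis:
  fixes B :: "(real^'n) set"
  assumes B: "independent B" "span B = UNIV" "\<forall>b\<in>B. primitive b"
  shows "\<exists>p. p \<notin> B \<and> simplex_pgs (insert p B)"
proof -
  have fin: "finite B" and card: "card B = CARD('n)"
    using B(1,2) basis_card_eq_dim[of B UNIV] independent_imp_finite by auto
  have indep: "\<And>c. (\<Sum>v\<in>B. c v *\<^sub>R v) = 0 \<Longrightarrow> \<forall>v\<in>B. c v = 0"
    using B(1) unfolding independent_explicit by blast
  have "B \<noteq> {}" using card by auto
  define q where "q = - sum id B"
  have "q \<in> lattice_pts" unfolding q_def
    using B(3) primitive_lattice_pts by (intro lattice_pts_uminus lattice_pts_sum) auto
  moreover have "q \<noteq> 0"
    using indep[of "\<lambda>_. 1"] \<open>B \<noteq> {}\<close> unfolding q_def by auto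
  ultimately obtain p g where p: "primitive p" "g > 0" "q = g *\<^sub>R p"
    using lattice_pts_primitive_multiple by blast
  have "p \<notin> B"
  proof
    assume "p \<in> B"
    have "(\<Sum>v\<in>B. (1 + (if v = p then g else 0)) *\<^sub>R v) = sum id B + g *\<^sub>R p"
      using fin \<open>p \<in> B\<close> by (simp add: scaleR_add_left sum.distrib if_distrib[of "\<lambda>c. c *\<^sub>R _"] sum.delta cong: if_cong)
    also have "\<dots> = 0" using p(3) unfolding q_def by (metis add.right_inverse)
    finally show False using indep \<open>p \<in> B\<close> p(2) by fastforce
  qed
  have "insert q B \<subseteq> convex_cone hull (insert p B)"
    using p(2,3) by (auto intro: hull_inc convex_cone_hull_mul)
  then have "convex_cone hull (insert q B) \<subseteq> convex_cone hull (insert p B)"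
    by (intro hull_minimal convex_cone_convex_cone_hull)
  then have "convex_cone hull (insert p B) = UNIV"
    using convex_cone_hull_insert_neg_sum[OF fin B(2)] unfolding q_def by blast
  then have "simplex_pgs (insert p B)"
    using fin card \<open>p \<notin> B\<close> B(3) p(1) by (simp add: simplex_pgs_def pgs_iff)
  with \<open>p \<notin> B\<close> show ?thesis by blast
qed

lemma simplex_pgs_extend_independent:
  fixes F :: "(real^'n) set"
  assumes F: "independent F" "\<forall>x\<in>F. primitive x" "card F < CARD('n)"
  shows "\<exists>S. simplex_pgs S \<and> F \<subseteq> S \<and> S \<inter> Basis \<noteq> {}"
proof -
  obtain B where B: "F \<subseteq> B" "B \<subseteq> F \<union> Basis" "independent B" "F \<union> Basis \<subseteq> span B"
    using maximal_independent_subset_extend[OF _ F(1), of "F \<union> Basis"] by blast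
  have "span B = UNIV" using B(4) by (metis span_Basis span_mono span_span le_sup_iff top.extremum_uniqueI)
  moreover have "\<forall>b\<in>B. primitive b" using B(2) F(2) primitive_Basis by blast
  ultimately obtain p where "simplex_pgs (insert p B)"
    using simplex_pgs_insert_basis[OF B(3)] by blast
  moreover have "card B = CARD('n)" using basis_card_eq_dim[of B UNIV] B(3) \<open>span B = UNIV\<close> by simp
  then have "B \<noteq> F" using F(3) by auto
  then have "B \<inter> Basis \<noteq> {}" using B(1,2) by blast
  ultimately show ?thesis using B(1) by blast
qed

lemma simplex_pgs_connected_Basis:
  fixes S T :: "(real^'n) set"
  assumes d: "2 \<le> CARD('n)" and S: "simplex_pgs S" and T: "simplex_pgs T" "Basis \<subseteq> T"
  shows "mori_link\<^sup>*\<^sup>* (S, S) (T, T)"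
proof -
  obtain s where "s \<in> S" using S pgs_UNIV_nonempty by (auto simp: simplex_pgs_def)
  then have "primitive s" using S by (auto simp: simplex_pgs_def pgs_iff)
  then have "independent {s}" "card {s} < CARD('n)" using primitive_nonzero d by auto
  then obtain S' e where S': "simplex_pgs S'" "s \<in> S'" "e \<in> S'" "e \<in> Basis"
    using simplex_pgs_extend_independent[of "{s}"] \<open>primitive s\<close> by blast
  have "mori_link\<^sup>*\<^sup>* (S, S) (S', S')" using simplex_pgs_pivot[OF d S S'(1) \<open>s \<in> S\<close>] S'(2) by blast
  also have "mori_link\<^sup>*\<^sup>* (S', S') (T, T)" using simplex_pgs_pivot[OF d S'(1) T(1) S'(3)] S'(4) T(2) by blast
  finally show ?thesis .
qed

lemma primitive_dim1:
  fixes x :: "real^'n"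
  assumes d: "CARD('n) = 1" and x: "primitive x"
  shows "x = axis i 1 \<or> x = - axis i 1"
proof -
  have xe: "x = (x $ i) *\<^sub>R axis i 1"
  proof (rule vec_eq_iff[THEN iffD2], rule allI)
    fix j :: 'n
    have "j = i" using d by (metis card_1_singletonE UNIV_I singletonD)
    then show "x $ j = ((x $ i) *\<^sub>R axis i 1) $ j" by (simp add: axis_def)
  qed
  obtain z where z: "x $ i = of_int z"
    using primitive_lattice_pts[OF x] unfolding lattice_pts_def by (auto elim: Ints_cases)
  have "z \<noteq> 0" using primitive_nonzero[OF x] xe z by auto
  moreover have "\<not> 2 \<le> z"
  proof
    assume "2 \<le> z"
    moreover have "x = of_int z *\<^sub>R axis i 1" using xe z by simp
    ultimately show False using x lattice_pts_axis unfolding primitive_def by blast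
  qed
  moreover have "\<not> 2 \<le> - z"
  proof
    assume "2 \<le> - z"
    moreover have "x = of_int (- z) *\<^sub>R (- axis i 1)" using xe z by simp
    ultimately show False
      using x lattice_pts_uminus[OF lattice_pts_axis] unfolding primitive_def by blast
  qed
  ultimately have "z = 1 \<or> z = - 1" by linarith
  then show ?thesis using xe z by auto
qed

lemma simplex_pgs_dim1:
  fixes S :: "(real^'n) set"
  assumes d: "CARD('n) = 1" and S: "simplex_pgs S"
  shows "S = {axis i 1, - axis i 1}"
proof (rule card_subset_eq)
  show "S \<subseteq> {axis i 1, - axis i 1}"
    using S primitive_dim1[OF d] by (auto simp: simplex_pgs_def pgs_iff)
  have "- axis i (1::real) \<noteq> axis i 1" using primitive_uminus_neq[OF primitive_axis] .
  then show "card S = card {axis i (1::real), - axis i 1}" using S d by (simp add: simplex_pgs_def)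
qed simp

lemma simplex_pgs_connected:
  fixes S T :: "(real^'n) set"
  assumes S: "simplex_pgs S" and T: "simplex_pgs T"
  shows "mori_link\<^sup>*\<^sup>* (S, S) (T, T)"
proof (cases "2 \<le> CARD('n)")
  case True
  obtain p :: "real^'n" where "simplex_pgs (insert p Basis)"
    using simplex_pgs_insert_basis[OF independent_Basis span_Basis] primitive_Basis by blast
  then have "mori_link\<^sup>*\<^sup>* (S, S) (insert p Basis, insert p Basis)"
    "mori_link\<^sup>*\<^sup>* (T, T) (insert p Basis, insert p Basis)"
    using simplex_pgs_connected_Basis[OF True] S T by blast+
  then show ?thesis by (meson mori_link_rtranclp_sym rtranclp_trans)
next
  case False
  then have "CARD('n) = 1" using zero_less_card_finite[where 'a='n] by linarith
  then have "S = T" using simplex_pgs_dim1 S T by blast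
  then show ?thesis by simp
qed

text \<open>If the fiber \<open>F\<close> is not full-dimensional, drop one vector \<open>f\<close> of \<open>F\<close>: the rest is a basis
  of \<open>span F\<close>, which extends to a simplex \<open>S\<close>, and \<open>(F, insert f S)\<close> is linked to both \<open>(F, A)\<close>
  (same fiber) and \<open>(S, S)\<close>.\<close>
lemma mori_fiber_pgs_connected_to_simplex:
  fixes F A :: "(real^'n) set"
  assumes M: "mori_fiber_pgs (F, A)"
  shows "\<exists>S. simplex_pgs S \<and> mori_link\<^sup>*\<^sup>* (F, A) (S, S)"
proof -
  have A: "pgs UNIV A" "F = span F \<inter> A"
    and F: "pgs (span F) F" "card F = dim (span F) + 1"
    using M by (auto simp: mori_fiber_pgs_iff)
  show ?thesis
  proof (cases "span F = UNIV")
    case True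
    then have "F = A" "dim (span F) = CARD('n)" using A(2) by auto
    then have "simplex_pgs A" using A(1) F(2) by (simp add: simplex_pgs_def)
    with \<open>F = A\<close> show ?thesis by auto
  next
    case False
    have finF: "finite F" using F(1) by (simp add: pgs_iff)
    obtain f where "f \<in> F" using F(2) by fastforce
    define F1 where "F1 = F - {f}"
    have "f \<in> span F1"
      unfolding F1_def using F(1) \<open>f \<in> F\<close> by (intro in_span_delete_if_convex_cone_hull_eq_span) (auto simp: pgs_iff)
    then have "span F1 = span F" unfolding F1_def using \<open>f \<in> F\<close> by (metis insert_Diff span_redundant)
    have "card F1 = dim (span F)" unfolding F1_def using F(2) finF \<open>f \<in> F\<close> by simp
    then have "independent F1"
      using card_eq_dim[of F1 "span F1"] span_superset[of F1] \<open>span F1 = span F\<close> finF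
      unfolding F1_def by simp
    moreover have "card F1 < CARD('n)"
      using \<open>card F1 = dim (span F)\<close> False dim_eq_full[of F] dim_subset_UNIV_cart[of F] by simp
    moreover have "\<forall>x\<in>F1. primitive x" using F(1) unfolding F1_def pgs_iff by blast
    ultimately obtain S where S: "simplex_pgs S" "F1 \<subseteq> S"
      using simplex_pgs_extend_independent by blast
    have "F = insert f F1" "f \<notin> F1" unfolding F1_def using \<open>f \<in> F\<close> by auto
    then have "f \<notin> S" and M': "mori_fiber_pgs (F, insert f S)"
      using mori_fiber_pgs_insert_simplex[OF S(1,2) \<open>card F1 < CARD('n)\<close> F] \<open>f \<in> span F1\<close> by blast+
    moreover have "card (insert f S) = CARD('n) + 2"
      using S(1) \<open>f \<notin> S\<close> by (auto simp: simplex_pgs_def pgs_iff)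
    ultimately have "mori_link (F, insert f S) (S, S)" using mori_link_reduction_simplex[OF M' _ _ S(1)] by blast
    moreover have "mori_link\<^sup>*\<^sup>* (F, A) (F, insert f S)" using M M' by (rule mori_link_fixed_fiber)
    ultimately show ?thesis using S(1) by (meson rtranclp.rtrancl_into_rtrancl)
  qed
qed

theorem corollary3p2:
  fixes Af A Af' A' :: "(real^'n) set"
  assumes "mori_fiber_pgs (Af, A)" and "mori_fiber_pgs (Af', A')"
  shows "\<exists>xs. links_sequence xs \<and> hd xs = (Af, A) \<and> last xs = (Af', A')"
proof -
  obtain S where S: "simplex_pgs S" "mori_link\<^sup>*\<^sup>* (Af, A) (S, S)"
    using mori_fiber_pgs_connected_to_simplex[OF assms(1)] by blast
  obtain S' where S': "simplex_pgs S'" "mori_link\<^sup>*\<^sup>* (Af', A') (S', S')"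
    using mori_fiber_pgs_connected_to_simplex[OF assms(2)] by blast
  have "mori_link\<^sup>*\<^sup>* (Af, A) (Af', A')"
    using S(2) simplex_pgs_connected[OF S(1) S'(1)] mori_link_rtranclp_sym[OF S'(2)]
    by (meson rtranclp_trans)
  then show ?thesis using assms(1) by (rule links_sequence_if_rtranclp)
qed

end
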